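(* Let $\mu,\nu$ be Borel probability measures on $\mathbb{R}^d$ with compact supports and $\mu\ll\mathcal{L}^d$. Let $c:\mathbb{R}^d\times\mathbb{R}^d\to\mathbb{R}^+$ be continuous and satisfy: (i) for every $x$ there is a unique $y\in\mathbb{R}^d$ with $c(x,y)=0$, and for every $y\in\mathbb{R}^d$, $\inf_{x\in\mathbb{R}^d}c(x,y)=0$; (ii) for every $y$, $c(\cdot,y)$ is strictly quasiconvex: $c((1-t)x+t\bar x,y)<\max\{c(x,y),c(\bar x,y)\}$ for all $t\in(0,1)$ and all $x\neq\bar x$; (iii) for all $\lambda>0$ and $y\in\mathbb{R}^d$, the convex set $C_\lambda=\{z: c(z,y)\le\lambda\}$ has differentiable ($C^1$) boundary; (iv) for all $x,y,\tilde y\in\mathbb{R}^d$ and all $\lambda>0$: if $c(x,y)=c(x,\tilde y)=\lambda$ and $n_{c(\cdot,y)}(x)=n_{c(\cdot,\tilde y)}(x)$, then $y=\tilde y$. Let $\gamma\in\Pi(\mu,\nu)$ and $(x,\tilde y)\in R(\gamma)$. Then for every $y\in\mathbb{R}^d$ with $y\neq\tilde y$ there exists $(x',y')\in R(\gamma)$ such that $$\max\{c(x',y),c(x,y')\}<\max\{c(x,y),c(x',y')\}.$$ Moreover, if $x\in\mathrm{Leb}(A)$ for some Borel set $A\subset\mathbb{R}^d$, then $(x',y')$ can be chosen with $x'\in A$.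
   Context: $\Pi(\mu,\nu)$ is the set of Borel probability measures on $\mathbb{R}^d\times\mathbb{R}^d$ with first marginal $\mu$ and second marginal $\nu$. For $y\in\mathbb{R}^d$ and $x$ with $c(x,y)=\lambda>0$, $n_{c(\cdot,y)}(x)$ denotes the unit outer normal at $x$ to the sublevel set $\{z: c(z,y)\le\lambda\}$. For a Borel set $U\subset\mathbb{R}^d$, $\mathrm{Leb}(U)$ is the set of points $x\in U$ with $\lim_{r\to0^+}\mathcal{L}^d(U\cap B(x,r))/\mathcal{L}^d(B(x,r))=1$. For $\gamma\in\Pi(\mu,\nu)$, $y\in\mathbb{R}^d$, $r>0$, set $\gamma^{-1}(B(y,r)):=\pi^1\big((\mathbb{R}^d\times B(y,r))\cap\operatorname{supp}\gamma\big)$, where $\pi^1$ is the projection onto the first factor. A pair $(x,y)$ is $\gamma$-regular if $x\in\mathrm{Leb}(\gamma^{-1}(B(y,r)))$ for every $r>0$; $R(\gamma)$ denotes the set of $\gamma$-regular points. *)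

theory Defs
  imports "HOL-Probability.Probability"
begin

definition msupp :: "'a::metric_space measure \<Rightarrow> 'a set" where
  "msupp M = {x. \<forall>r>0. emeasure M (ball x r) > 0}"

definition borel_prob :: "'a::topological_space measure \<Rightarrow> bool" where
  "borel_prob M \<longleftrightarrow> prob_space M \<and> sets M = sets borel"

definition couplings :: "'a::euclidean_space measure \<Rightarrow> 'a measure \<Rightarrow> ('a \<times> 'a) measure set" where
  "couplings \<mu> \<nu> = {\<gamma>. borel_prob \<gamma> \<and> distr \<gamma> borel fst = \<mu> \<and> distr \<gamma> borel snd = \<nu>}"

definition Leb :: "'a::euclidean_space set \<Rightarrow> 'a set" where
  "Leb U = {x \<in> U. ((\<lambda>r. measure lebesgue (U \<inter> ball x r) / measure lebesgue (ball x r)) \<longlongrightarrow> 1) (at_right 0)}"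

definition preimg :: "('a::euclidean_space \<times> 'a) measure \<Rightarrow> 'a \<Rightarrow> real \<Rightarrow> 'a set" where
  "preimg \<gamma> y r = fst ` ((UNIV \<times> ball y r) \<inter> msupp \<gamma>)"

definition regular_pts :: "('a::euclidean_space \<times> 'a) measure \<Rightarrow> ('a \<times> 'a) set" where
  "regular_pts \<gamma> = {(x, y). \<forall>r>0. x \<in> Leb (preimg \<gamma> y r)}"

definition outer_normal :: "'a::euclidean_space set \<Rightarrow> 'a \<Rightarrow> 'a" where
  "outer_normal C x = (THE n. norm n = 1 \<and> (\<forall>z\<in>C. n \<bullet> (z - x) \<le> 0))"

definition C1_boundary :: "'a::euclidean_space set \<Rightarrow> bool" where
  "C1_boundary C \<longleftrightarrow> (\<forall>p \<in> frontier C. \<exists>U g G. open U \<and> p \<in> U \<and>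
      (\<forall>z\<in>U. (g has_derivative (\<lambda>h. G z \<bullet> h)) (at z)) \<and> continuous_on U G \<and> G p \<noteq> 0 \<and>
      C \<inter> U = {z \<in> U. g z \<le> (0::real)})"

end

theory Submission
  imports Defs
begin

(* The heart of the proof is a cone of improving pairs: a point p such that
   for all small t > 0, all q near p and all y' near yt the point x' = x + t (q - x) satisfies
   max (c x' y) (c x y') < max (c x y) (c x' y'). It is found by comparing c x y with c x yt.
   If c x yt < c x y, move x towards a point where c(.,y) is smaller. If c x y < c x yt, move x away
   from a point where c(.,yt) is smaller: by strict quasiconvexity c(.,y') then increases along the
   ray, while for x' close to x the order of c x' y and c x' y' is that of c x y and c x yt.
   If both values equal lam > 0 (lam = 0 would force y = yt), hypothesis (iv) makes the outer normals
   n and m of the two sublevel sets differ; the direction m - n points into the first sublevel set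
   and n - m into the second, which yields both a descent for c(.,y) and a point to move away from.
   The cone fills a fixed proportion of every small ball around x, so it meets A and the sets
   gamma^-1(B(yt, r)), of which x is a density point, in positive measure; by Lebesgue's density
   theorem almost every such point is the first coordinate of a gamma-regular pair. *)

section \<open>Lebesgue density points\<close>

lemma measure_ball_pos: "r > 0 \<Longrightarrow> measure lebesgue (ball (x::'a::euclidean_space) r) > 0"
  using content_ball_pos by simp

lemma Int_ball_lmeasurable: "E \<in> sets lebesgue \<Longrightarrow> E \<inter> ball x r \<in> lmeasurable"
  using fmeasurable_Int_fmeasurable[OF lmeasurable_ball, of E x r] by (simp add: Int_commute)

lemma measure_ball_Diff:
  assumes "E \<in> sets lebesgue"
  shows "measure lebesgue (ball x r - E) = measure lebesgue (ball x r) - measure lebesgue (E \<inter> ball x r)"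
proof -
  have "ball x r - E = ball x r - (E \<inter> ball x r)" by auto
  then show ?thesis using Int_ball_lmeasurable[OF assms, of x r]
    by (simp add: measure_Diff emeasure_eq_measure2[OF lmeasurable_ball] fmeasurable.Int)
qed

lemma density_ratio_le_1:
  assumes "E \<in> sets lebesgue" "r > 0"
  shows "measure lebesgue (E \<inter> ball x r) / measure lebesgue (ball (x::'a::euclidean_space) r) \<le> 1"
proof -
  have "measure lebesgue (E \<inter> ball x r) \<le> measure lebesgue (ball x r)"
    using Int_ball_lmeasurable[OF assms(1)] by (intro measure_mono_fmeasurable) auto
  then show ?thesis using measure_ball_pos[OF assms(2)] by simp
qed

lemma Leb_mono:
  fixes E E' :: "'a::euclidean_space set"
  assumes E: "E \<in> sets lebesgue" and E': "E' \<in> sets lebesgue" and "E \<subseteq> E'" and x: "x \<in> Leb E"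
  shows "x \<in> Leb E'"
proof -
  let ?d = "\<lambda>E r. measure lebesgue (E \<inter> ball x r) / measure lebesgue (ball x r)"
  have "?d E r \<le> ?d E' r" if "r > 0" for r
  proof (rule divide_right_mono)
    show "measure lebesgue (E \<inter> ball x r) \<le> measure lebesgue (E' \<inter> ball x r)"
      using Int_ball_lmeasurable[OF E] Int_ball_lmeasurable[OF E'] \<open>E \<subseteq> E'\<close>
      by (intro measure_mono_fmeasurable) auto
  qed simp
  then have "\<forall>\<^sub>F r in at_right 0. ?d E r \<le> ?d E' r"
    by (intro eventually_at_rightI[of 0 1]) auto
  moreover have "\<forall>\<^sub>F r in at_right 0. ?d E' r \<le> 1"
    using density_ratio_le_1[OF E'] by (intro eventually_at_rightI[of 0 1]) auto
  moreover have "(?d E \<longlongrightarrow> 1) (at_right 0)"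
    using x by (simp add: Leb_def)
  ultimately have "(?d E' \<longlongrightarrow> 1) (at_right 0)"
    by (rule tendsto_sandwich[OF _ _ _ tendsto_const])
  then show ?thesis using x \<open>E \<subseteq> E'\<close> by (auto simp: Leb_def)
qed

lemma Leb_Int:
  fixes A B :: "'a::euclidean_space set"
  assumes A: "A \<in> sets lebesgue" and B: "B \<in> sets lebesgue" and "x \<in> Leb A" "x \<in> Leb B"
  shows "x \<in> Leb (A \<inter> B)"
proof -
  let ?d = "\<lambda>E r. measure lebesgue (E \<inter> ball x r) / measure lebesgue (ball x r)"
  have "?d A r + ?d B r - 1 \<le> ?d (A \<inter> B) r" if "r > 0" for r
  proof -
    have "measure lebesgue ((A \<inter> ball x r) \<union> (B \<inter> ball x r)) \<le> measure lebesgue (ball x r)"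
      using Int_ball_lmeasurable[OF A] Int_ball_lmeasurable[OF B]
      by (intro measure_mono_fmeasurable) auto
    moreover have "(A \<inter> ball x r) \<inter> (B \<inter> ball x r) = A \<inter> B \<inter> ball x r" by auto
    ultimately have "measure lebesgue (A \<inter> ball x r) + measure lebesgue (B \<inter> ball x r)
        \<le> measure lebesgue (ball x r) + measure lebesgue (A \<inter> B \<inter> ball x r)"
      using measure_Un3[OF Int_ball_lmeasurable[OF A] Int_ball_lmeasurable[OF B]] by simp
    then have "(measure lebesgue (A \<inter> ball x r) + measure lebesgue (B \<inter> ball x r)
        - measure lebesgue (ball x r)) / measure lebesgue (ball x r) \<le> ?d (A \<inter> B) r"
      by (intro divide_right_mono) auto
    then show ?thesis
      using measure_ball_pos[OF that, of x] by (simp add: diff_divide_distrib add_divide_distrib)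
  qed
  then have "\<forall>\<^sub>F r in at_right 0. ?d A r + ?d B r - 1 \<le> ?d (A \<inter> B) r"
    by (intro eventually_at_rightI[of 0 1]) auto
  moreover have "\<forall>\<^sub>F r in at_right 0. ?d (A \<inter> B) r \<le> 1"
    using density_ratio_le_1[OF sets.Int[OF A B]] by (intro eventually_at_rightI[of 0 1]) auto
  moreover have "((\<lambda>r. ?d A r + ?d B r - 1) \<longlongrightarrow> 1) (at_right 0)"
    using tendsto_diff[OF tendsto_add tendsto_const, of "?d A" 1 _ "?d B" 1 1] assms(3,4)
    by (simp add: Leb_def)
  ultimately have "(?d (A \<inter> B) \<longlongrightarrow> 1) (at_right 0)"
    by (rule tendsto_sandwich[OF _ _ _ tendsto_const])
  then show ?thesis using assms(3,4) by (auto simp: Leb_def)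
qed

lemma Leb_UNIV: "x \<in> Leb (UNIV :: 'a::euclidean_space set)"
proof -
  have "\<forall>\<^sub>F r in at_right 0. measure lebesgue (UNIV \<inter> ball x r) / measure lebesgue (ball x r) = 1"
    using measure_ball_pos by (intro eventually_at_rightI[of 0 1]) auto
  then show ?thesis
    by (simp add: Leb_def tendsto_eventually)
qed

lemma Leb_if_complement_small:
  fixes E :: "'a::euclidean_space set"
  assumes E: "E \<in> sets lebesgue" and "x \<in> E"
    and small: "\<And>k. \<forall>\<^sub>F r in at_right 0.
      real (Suc k) * measure lebesgue (ball x r - E) \<le> measure lebesgue (ball x r)"
  shows "x \<in> Leb E"
proof -
  let ?d = "\<lambda>r. measure lebesgue (E \<inter> ball x r) / measure lebesgue (ball x r)"
  have "\<forall>\<^sub>F r in at_right 0. dist (?d r) 1 < e" if "e > 0" for e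
  proof -
    obtain k :: nat where k: "1 / real (Suc k) < e"
      using \<open>e > 0\<close> by (metis nat_approx_posE)
    have "dist (?d r) 1 < e"
      if r: "r > 0" and le: "real (Suc k) * measure lebesgue (ball x r - E) \<le> measure lebesgue (ball x r)"
      for r
    proof -
      have pos: "measure lebesgue (ball x r) > 0" using measure_ball_pos[OF r] .
      have "1 - ?d r = measure lebesgue (ball x r - E) / measure lebesgue (ball x r)"
        using pos by (simp add: measure_ball_Diff[OF E] diff_divide_distrib)
      also have "\<dots> \<le> 1 / real (Suc k)"
        using le pos by (simp add: field_simps)
      finally show ?thesis
        using density_ratio_le_1[OF E r] k by (simp add: dist_real_def)
    qed
    then show ?thesis
      using eventually_conj[OF eventually_at_right_less small[of k]] by (auto elim: eventually_mono)
  qed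
  then show ?thesis
    using \<open>x \<in> E\<close> by (simp add: Leb_def tendstoI)
qed

lemma emeasure_disjoint_UN_le_cmult:
  assumes C: "countable C" "disjoint_family_on B C" and B: "\<And>i. i \<in> C \<Longrightarrow> B i \<in> sets M"
    and F: "F \<in> sets M" and G: "G \<in> sets M" "\<And>i. i \<in> C \<Longrightarrow> B i \<subseteq> G"
    and le: "\<And>i. i \<in> C \<Longrightarrow> emeasure M (B i) \<le> K * emeasure M (B i \<inter> F)"
  shows "emeasure M (\<Union>i\<in>C. B i) \<le> K * emeasure M (G \<inter> F)"
proof -
  have "emeasure M (\<Union>i\<in>C. B i) = (\<integral>\<^sup>+i. emeasure M (B i) \<partial>count_space C)"
    using B C by (intro emeasure_UN_countable)
  also have "\<dots> \<le> (\<integral>\<^sup>+i. K * emeasure M (B i \<inter> F) \<partial>count_space C)"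
    using le by (intro nn_integral_mono) simp
  also have "\<dots> = K * (\<integral>\<^sup>+i. emeasure M (B i \<inter> F) \<partial>count_space C)"
    by (rule nn_integral_cmult) simp
  also have "(\<integral>\<^sup>+i. emeasure M (B i \<inter> F) \<partial>count_space C) = emeasure M (\<Union>i\<in>C. B i \<inter> F)"
  proof (rule emeasure_UN_countable[symmetric])
    show "disjoint_family_on (\<lambda>i. B i \<inter> F) C"
      using C(2) unfolding disjoint_family_on_def by blast
  qed (use B F C(1) in auto)
  also have "emeasure M (\<Union>i\<in>C. B i \<inter> F) \<le> emeasure M (G \<inter> F)"
    using G F by (intro emeasure_mono) auto
  finally show ?thesis
    by (simp add: mult_left_mono)
qed

lemma Vitali_disjoint_balls:
  fixes S :: "'a::euclidean_space set"
  assumes V: "open V" "S \<subseteq> V" and freq: "\<And>x. x \<in> S \<Longrightarrow> \<exists>\<^sub>F r in at_right 0. P x r"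
  obtains C where "countable C" "disjoint_family_on (\<lambda>(z, r). ball z r) C"
    "\<And>z r. (z, r) \<in> C \<Longrightarrow> 0 < r \<and> ball z r \<subseteq> V \<and> P z r"
    "negligible (S - (\<Union>(z, r) \<in> C. ball z r))"
proof -
  define I where "I = {(z, r). 0 < r \<and> ball z r \<subseteq> V \<and> P z r}"
  have "\<exists>i. i \<in> I \<and> x \<in> ball (fst i) (snd i) \<and> snd i < d" if x: "x \<in> S" and "0 < d" for x d
  proof -
    obtain \<rho> where \<rho>: "\<rho> > 0" "ball x \<rho> \<subseteq> V"
      using V x openE by blast
    have "\<exists>\<^sub>F r in at_right 0. r \<in> {0<..<min d \<rho>} \<and> P x r"
      using \<rho> \<open>0 < d\<close> by (intro frequently_eventually_conj freq x eventually_at_right_real) simp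
    then obtain r where "r \<in> {0<..<min d \<rho>}" "P x r"
      by (auto dest: frequently_ex)
    then show ?thesis
      using \<rho> by (intro exI[of _ "(x, r)"]) (auto simp: I_def)
  qed
  then obtain C where "countable C" "C \<subseteq> I"
    and disj: "pairwise (\<lambda>i j. disjnt (ball (fst i) (snd i)) (ball (fst j) (snd j))) C"
    and null: "negligible (S - (\<Union>i\<in>C. ball (fst i) (snd i)))"
    by (rule Vitali_covering_theorem_balls[of S I fst snd]) blast
  show thesis
  proof (rule that)
    show "countable C" by fact
    show "disjoint_family_on (\<lambda>(z, r). ball z r) C"
      using disj unfolding disjoint_family_on_def pairwise_def disjnt_def by (simp add: case_prod_beta)
    show "0 < r \<and> ball z r \<subseteq> V \<and> P z r" if "(z, r) \<in> C" for z r
      using \<open>C \<subseteq> I\<close> that by (auto simp: I_def)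
    show "negligible (S - (\<Union>(z, r) \<in> C. ball z r))"
      using null by (simp add: case_prod_beta)
  qed
qed

lemma Vitali_cover_emeasure_le:
  fixes S :: "'a::euclidean_space set"
  assumes V: "open V" "S \<subseteq> V" and F: "F \<in> sets lebesgue" and "K > 0"
    and freq: "\<And>x. x \<in> S \<Longrightarrow>
      \<exists>\<^sub>F r in at_right 0. measure lebesgue (ball x r) < K * measure lebesgue (ball x r \<inter> F)"
  obtains T where "S \<subseteq> T" "T \<in> sets lebesgue"
    "emeasure lebesgue T \<le> ennreal K * emeasure lebesgue (V \<inter> F)"
proof -
  obtain C where C: "countable C" "disjoint_family_on (\<lambda>(z, r). ball z r) C"
    and balls: "\<And>z r. (z, r) \<in> C \<Longrightarrow> 0 < r \<and> ball z r \<subseteq> V \<and>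
      measure lebesgue (ball z r) < K * measure lebesgue (ball z r \<inter> F)"
    and null: "negligible (S - (\<Union>(z, r) \<in> C. ball z r))"
    using Vitali_disjoint_balls[where P = "\<lambda>x r. measure lebesgue (ball x r) < K * measure lebesgue (ball x r \<inter> F)",
        OF V freq] by blast
  define B where "B = (\<lambda>(z, r). ball z r :: 'a set)"
  have "emeasure lebesgue (B i) \<le> ennreal K * emeasure lebesgue (B i \<inter> F)" if "i \<in> C" for i
  proof -
    obtain z r where i: "i = (z, r)" by (cases i)
    have "ball z r \<inter> F \<in> lmeasurable"
      using F by (simp add: Int_commute Int_ball_lmeasurable)
    then have "ennreal K * emeasure lebesgue (ball z r \<inter> F) = ennreal (K * measure lebesgue (ball z r \<inter> F))"
      using \<open>K > 0\<close> by (simp add: emeasure_eq_measure2 ennreal_mult)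
    moreover have "emeasure lebesgue (ball z r) = ennreal (measure lebesgue (ball z r))"
      by (simp add: emeasure_eq_measure2)
    ultimately show ?thesis
      using balls[of z r] that by (simp add: B_def i ennreal_leI)
  qed
  moreover have "B i \<subseteq> V" "B i \<in> sets lebesgue" if "i \<in> C" for i
    using balls that by (auto simp: B_def split: prod.splits)
  ultimately have U: "emeasure lebesgue (\<Union>i\<in>C. B i) \<le> ennreal K * emeasure lebesgue (V \<inter> F)"
    using C F V(1) by (intro emeasure_disjoint_UN_le_cmult) (auto simp: B_def[symmetric])
  have Um: "(\<Union>i\<in>C. B i) \<in> sets lebesgue"
    using C(1) by (intro sets.countable_UN'') (auto simp: B_def split: prod.splits)
  have Nm: "S - (\<Union>i\<in>C. B i) \<in> null_sets lebesgue"
    using null by (simp add: B_def negligible_iff_null_sets)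
  show ?thesis
  proof
    show "S \<subseteq> (\<Union>i\<in>C. B i) \<union> (S - (\<Union>i\<in>C. B i))" by blast
    show "(\<Union>i\<in>C. B i) \<union> (S - (\<Union>i\<in>C. B i)) \<in> sets lebesgue"
      by (intro sets.Un Um null_setsD2[OF Nm])
    show "emeasure lebesgue ((\<Union>i\<in>C. B i) \<union> (S - (\<Union>i\<in>C. B i)))
        \<le> ennreal K * emeasure lebesgue (V \<inter> F)"
      using U by (simp only: emeasure_Un_null_set[OF Um Nm])
  qed
qed

lemma negligible_low_density_points:
  fixes E :: "'a::euclidean_space set"
  assumes E: "E \<in> sets lebesgue" and K: "K > 0"
  shows "negligible {x \<in> E. \<exists>\<^sub>F r in at_right 0.
    measure lebesgue (ball x r) < K * measure lebesgue (ball x r - E)}" (is "negligible ?S")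
  unfolding negligible_outer_le
proof (intro allI impI)
  fix e :: real assume "e > 0"
  obtain V where V: "open V" "E \<subseteq> V" "emeasure lebesgue (V - E) < ennreal (e / K)"
    using sets_lebesgue_outer_open[OF E, of "e / K"] \<open>e > 0\<close> K by (metis divide_pos_pos)
  have freq: "\<exists>\<^sub>F r in at_right 0. measure lebesgue (ball x r) < K * measure lebesgue (ball x r \<inter> - E)"
    if "x \<in> ?S" for x
    using that by (simp add: Diff_eq)
  have "?S \<subseteq> V"
    using V(2) by blast
  obtain T where T: "?S \<subseteq> T" "T \<in> sets lebesgue"
    and le: "emeasure lebesgue T \<le> ennreal K * emeasure lebesgue (V \<inter> - E)"
    using Vitali_cover_emeasure_le[OF V(1) \<open>?S \<subseteq> V\<close> _ K freq] Compl_in_sets_lebesgue E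
    by blast
  note le
  also have "ennreal K * emeasure lebesgue (V \<inter> - E) < ennreal K * ennreal (e / K)"
    using V(3) K by (simp add: Diff_eq ennreal_mult_strict_left_mono)
  also have "\<dots> = ennreal e"
    using K \<open>e > 0\<close> by (simp add: ennreal_mult[symmetric])
  finally have lt: "emeasure lebesgue T < ennreal e" .
  have Tm: "T \<in> lmeasurable"
    using T(2) order.strict_trans[OF lt ennreal_less_top] by (simp add: fmeasurable_def)
  have "measure lebesgue T < e"
    using lt measure_nonneg[of lebesgue T] by (simp add: emeasure_eq_measure2[OF Tm] ennreal_less_iff)
  then show "\<exists>T. ?S \<subseteq> T \<and> T \<in> lmeasurable \<and> measure lebesgue T \<le> e"
    using T(1) Tm by (intro exI[of _ T]) simp
qed

theorem negligible_Diff_Leb: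
  fixes E :: "'a::euclidean_space set"
  assumes E: "E \<in> sets lebesgue"
  shows "negligible (E - Leb E)"
proof -
  let ?S = "\<lambda>k. {x \<in> E. \<exists>\<^sub>F r in at_right 0.
    measure lebesgue (ball x r) < real (Suc k) * measure lebesgue (ball x r - E)}"
  have "x \<in> (\<Union>k. ?S k)" if x: "x \<in> E - Leb E" for x
  proof -
    obtain k where "\<not> (\<forall>\<^sub>F r in at_right 0.
        real (Suc k) * measure lebesgue (ball x r - E) \<le> measure lebesgue (ball x r))"
      using Leb_if_complement_small[OF E] x by blast
    then show ?thesis
      using x by (auto simp: not_eventually not_le)
  qed
  then have "E - Leb E \<subseteq> (\<Union>k. ?S k)" by blast
  moreover have "negligible (\<Union>k. ?S k)"
    using negligible_low_density_points[OF E] by (intro negligible_countable_Union) auto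
  ultimately show ?thesis
    using negligible_subset by blast
qed

lemma measure_ball_scale:
  assumes "s \<ge> 0" "\<rho> > 0"
  shows "measure lebesgue (ball (z::'a::euclidean_space) s)
    = (s / \<rho>) ^ DIM('a) * measure lebesgue (ball (x::'a) \<rho>)"
  using assms by (simp add: content_ball power_divide field_simps)

lemma Leb_eventually_Diff_small:
  fixes E :: "'a::euclidean_space set"
  assumes E: "E \<in> sets lebesgue" and x: "x \<in> Leb E" and "\<kappa> > 0"
  shows "\<forall>\<^sub>F \<rho> in at_right 0. measure lebesgue (ball x \<rho> - E) < \<kappa> * measure lebesgue (ball x \<rho>)"
proof -
  have "\<forall>\<^sub>F \<rho> in at_right 0.
      1 - \<kappa> < measure lebesgue (E \<inter> ball x \<rho>) / measure lebesgue (ball x \<rho>)"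
    using x \<open>\<kappa> > 0\<close> by (intro order_tendstoD(1)) (auto simp: Leb_def)
  then show ?thesis
    using eventually_at_right_less
  proof eventually_elim
    case (elim \<rho>)
    then show ?case
      using measure_ball_pos[of \<rho> x] by (simp add: measure_ball_Diff[OF E] field_simps)
  qed
qed

lemma measure_Int_pos_if_Diff_less:
  assumes "B \<subseteq> D" "B \<in> sets lebesgue" "D \<in> lmeasurable" "E \<in> sets lebesgue"
    and less: "measure lebesgue (D - E) < measure lebesgue B"
  shows "measure lebesgue (B \<inter> E) > 0"
proof -
  have "D \<in> sets lebesgue"
    using assms(3) by (rule fmeasurableD)
  then have "(B \<inter> E) \<union> (D - E) \<in> sets lebesgue"
    by (intro sets.Un sets.Int sets.Diff assms(2,4))
  then have "measure lebesgue B \<le> measure lebesgue ((B \<inter> E) \<union> (D - E))"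
    using assms(1-3) by (intro measure_mono_fmeasurable fmeasurableI2[OF assms(3)]) auto
  also have "\<dots> \<le> measure lebesgue (B \<inter> E) + measure lebesgue (D - E)"
    using \<open>D \<in> sets lebesgue\<close> by (intro measure_Un_le sets.Int sets.Diff assms(2,4))
  finally show ?thesis
    using less by linarith
qed

lemma Leb_meets_proportional_balls:
  fixes E N :: "'a::euclidean_space set"
  assumes E: "E \<in> sets lebesgue" and x: "x \<in> Leb E" and N: "negligible N" and "\<kappa> > 0"
  shows "\<forall>\<^sub>F \<rho> in at_right 0.
    \<forall>z s. ball z s \<subseteq> ball x \<rho> \<longrightarrow> \<kappa> * \<rho> \<le> s \<longrightarrow> ball z s \<inter> E - N \<noteq> {}"
  using Leb_eventually_Diff_small[OF E x zero_less_power[OF \<open>\<kappa> > 0\<close>, of "DIM('a)"]]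
    eventually_at_right_less
proof eventually_elim
  case (elim \<rho>)
  show ?case
  proof (intro allI impI)
    fix z s assume sub: "ball z s \<subseteq> ball x \<rho>" and "\<kappa> * \<rho> \<le> s"
    then have "\<kappa> ^ DIM('a) \<le> (s / \<rho>) ^ DIM('a)"
      using \<open>\<kappa> > 0\<close> elim(2) by (intro power_mono) (simp_all add: pos_le_divide_eq)
    then have "\<kappa> ^ DIM('a) * measure lebesgue (ball x \<rho>) \<le> (s / \<rho>) ^ DIM('a) * measure lebesgue (ball x \<rho>)"
      by (rule mult_right_mono) simp
    also have "\<dots> = measure lebesgue (ball z s)"
      using \<open>\<kappa> * \<rho> \<le> s\<close> mult_pos_pos[OF \<open>\<kappa> > 0\<close> elim(2)] elim(2)
      by (intro measure_ball_scale[symmetric]) simp_all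
    finally have "\<kappa> ^ DIM('a) * measure lebesgue (ball x \<rho>) \<le> measure lebesgue (ball z s)" .
    then have "measure lebesgue (ball z s) > measure lebesgue (ball x \<rho> - E)"
      using elim(1) by linarith
    then have "measure lebesgue (ball z s \<inter> E) > 0"
      by (intro measure_Int_pos_if_Diff_less[OF sub] E) auto
    then have "\<not> negligible (ball z s \<inter> E)"
      using negligible_imp_measure0 by force
    then show "ball z s \<inter> E - N \<noteq> {}"
      using N negligible_subset by blast
  qed
qed

lemma Leb_meets_cone:
  fixes E N :: "'a::euclidean_space set"
  assumes E: "E \<in> sets lebesgue" and x: "x \<in> Leb E" and N: "negligible N"
    and "\<delta> > 0" "\<tau> > 0"
  obtains t q where "0 < t" "t \<le> \<tau>" "q \<in> ball p \<delta>" "x + t *\<^sub>R (q - x) \<in> E - N"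
proof -
  define L where "L = norm (p - x) + \<delta>"
  have "L > 0"
    using \<open>\<delta> > 0\<close> by (simp add: L_def add_nonneg_pos)
  then have "\<forall>\<^sub>F \<rho> in at_right 0. \<rho> \<in> {0<..<\<tau> * L} \<and> (\<forall>z s. ball z s \<subseteq> ball x \<rho> \<longrightarrow>
      \<delta> / L * \<rho> \<le> s \<longrightarrow> ball z s \<inter> E - N \<noteq> {})"
    using \<open>\<tau> > 0\<close> \<open>\<delta> > 0\<close>
    by (intro eventually_conj eventually_at_right_real Leb_meets_proportional_balls[OF E x N]) simp_all
  then obtain \<rho> where \<rho>: "\<rho> \<in> {0<..<\<tau> * L}" and meets: "\<forall>z s. ball z s \<subseteq> ball x \<rho> \<longrightarrow>
      \<delta> / L * \<rho> \<le> s \<longrightarrow> ball z s \<inter> E - N \<noteq> {}"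
    using eventually_happens'[OF trivial_limit_at_right_real] by blast
  define t where "t = \<rho> / L"
  have t: "0 < t" "t \<le> \<tau>"
    using \<rho> \<open>L > 0\<close> by (auto simp: t_def pos_divide_le_eq)
  have "t * norm (p - x) + t * \<delta> = t * L"
    by (simp add: L_def algebra_simps)
  also have "\<dots> = \<rho>"
    using \<open>L > 0\<close> by (simp add: t_def)
  finally have "t * norm (p - x) + t * \<delta> = \<rho>" .
  then have "ball (x + t *\<^sub>R (p - x)) (t * \<delta>) \<subseteq> ball x \<rho>"
    unfolding ball_subset_ball_iff using t(1) by (simp add: dist_norm)
  moreover have "\<delta> / L * \<rho> \<le> t * \<delta>"
    by (simp add: t_def mult.commute)
  ultimately obtain x' where x': "x' \<in> ball (x + t *\<^sub>R (p - x)) (t * \<delta>)" "x' \<in> E - N"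
    using meets by blast
  \<comment> \<open>The ball is the image of \<open>ball p \<delta>\<close> under \<open>q \<mapsto> x + t (q - x)\<close>; invert that map.\<close>
  define q where "q = x + (1 / t) *\<^sub>R (x' - x)"
  have "x + t *\<^sub>R (p - x) - x' = t *\<^sub>R (p - q)"
    using t by (simp add: q_def algebra_simps)
  then have "q \<in> ball p \<delta>"
    using x'(1) t by (simp add: dist_norm)
  moreover have "x' = x + t *\<^sub>R (q - x)"
    using t by (simp add: q_def)
  ultimately show thesis
    using that t x'(2) by blast
qed

section \<open>Support and regular points of a coupling\<close>

lemma closed_msupp:
  fixes M :: "'a::metric_space measure"
  assumes "sets M = sets borel"
  shows "closed (msupp M)"
proof -
  have "\<exists>e>0. ball x e \<subseteq> - msupp M" if "x \<in> - msupp M" for x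
  proof -
    obtain r where "r > 0" and null: "emeasure M (ball x r) = 0"
      using \<open>x \<in> - msupp M\<close> by (auto simp: msupp_def)
    have "z \<notin> msupp M" if "z \<in> ball x r" for z
    proof -
      have "ball z (r - dist x z) \<subseteq> ball x r"
        by metric
      then have "emeasure M (ball z (r - dist x z)) = 0"
        using null emeasure_mono[of "ball z (r - dist x z)" "ball x r" M] assms by simp
      then show ?thesis
        using that by (auto simp: msupp_def dist_commute intro!: exI[of _ "r - dist x z"])
    qed
    then show ?thesis
      using \<open>r > 0\<close> by blast
  qed
  then show ?thesis
    unfolding closed_def by (intro openI) blast
qed

lemma borel_fst_image_Int_ball:
  fixes F :: "('a::euclidean_space \<times> 'b::euclidean_space) set"
  assumes "closed F"
  shows "fst ` (F \<inter> (UNIV \<times> ball y r)) \<in> sets borel"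
proof -
  define K where "K n = F \<inter> (cball 0 (real n) \<times> cball y (r - 1 / real (Suc n)))" for n
  have "F \<inter> (UNIV \<times> ball y r) = (\<Union>n. K n)"
  proof (intro equalityI subsetI)
    fix p assume p: "p \<in> F \<inter> (UNIV \<times> ball y r)"
    obtain n1 :: nat where n1: "norm (fst p) \<le> real n1"
      using real_arch_simple by blast
    obtain n2 :: nat where n2: "1 / real (Suc n2) < r - dist y (snd p)"
      by (rule nat_approx_posE[of "r - dist y (snd p)"]) (use p in auto)
    have "1 / real (Suc (max n1 n2)) \<le> 1 / real (Suc n2)"
      by (simp add: divide_left_mono)
    then have "p \<in> K (max n1 n2)"
      using p n1 n2 by (auto simp: K_def mem_Times_iff)
    then show "p \<in> (\<Union>n. K n)" by blast
  next
    fix p assume "p \<in> (\<Union>n. K n)"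
    then obtain n where "p \<in> K n" by blast
    then have "p \<in> F" and "dist y (snd p) \<le> r - 1 / real (Suc n)"
      unfolding K_def by (auto simp del: of_nat_Suc)
    moreover have "0 < 1 / real (Suc n)" by simp
    ultimately have "p \<in> F" "dist y (snd p) < r" by linarith+
    then show "p \<in> F \<inter> (UNIV \<times> ball y r)"
      by (cases p) auto
  qed
  moreover have "compact (K n)" for n
    unfolding K_def using assms by (intro closed_Int_compact compact_Times) auto
  then have "fst ` K n \<in> sets borel" for n
    by (intro borel_closed compact_imp_closed compact_continuous_image continuous_on_fst continuous_on_id)
  ultimately show ?thesis
    by (simp add: image_UN)
qed

lemma preimg_sets_lebesgue:
  fixes \<gamma> :: "('a::euclidean_space \<times> 'a) measure"
  assumes "sets \<gamma> = sets borel"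
  shows "preimg \<gamma> y r \<in> sets lebesgue"
proof -
  have "preimg \<gamma> y r \<in> sets borel"
    unfolding preimg_def Int_commute[of "UNIV \<times> ball y r"]
    by (rule borel_fst_image_Int_ball[OF closed_msupp[OF assms]])
  then show ?thesis by simp
qed

lemma preimg_mono:
  assumes "ball z r \<subseteq> ball y s"
  shows "preimg \<gamma> z r \<subseteq> preimg \<gamma> y s"
  using assms unfolding preimg_def by auto

lemma regular_pts_almost_everywhere:
  fixes \<gamma> :: "('a::euclidean_space \<times> 'a) measure"
  assumes sets: "sets \<gamma> = sets borel"
  obtains N where "negligible N"
    "\<And>x y. (x, y) \<in> msupp \<gamma> \<Longrightarrow> x \<notin> N \<Longrightarrow> (x, y) \<in> regular_pts \<gamma>"
proof -
  obtain D :: "'a set" where D: "countable D" "\<And>U. open U \<Longrightarrow> U \<noteq> {} \<Longrightarrow> \<exists>d\<in>D. d \<in> U"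
    using countable_dense_exists by blast
  define bad where "bad d q = preimg \<gamma> d q - Leb (preimg \<gamma> d q)" for d q
  define N where "N = (\<Union>(d, q) \<in> D \<times> \<rat>. bad d q)"
  have "negligible N"
    unfolding N_def using D(1) countable_rat
    by (intro negligible_countable_Union countable_image)
      (auto simp: bad_def intro: negligible_Diff_Leb[OF preimg_sets_lebesgue[OF sets]])
  moreover have "(x, y) \<in> regular_pts \<gamma>" if xy: "(x, y) \<in> msupp \<gamma>" "x \<notin> N" for x y
    unfolding regular_pts_def
  proof (clarify)
    fix s :: real assume "s > 0"
    obtain d where d: "d \<in> D" "dist y d < s / 4"
      using D(2)[of "ball y (s / 4)"] \<open>s > 0\<close> by auto
    obtain q where q: "q \<in> \<rat>" "s / 4 < q" "q < s / 2"
      using Rats_dense_in_real[of "s / 4" "s / 2"] \<open>s > 0\<close> by auto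
    have "ball d q \<subseteq> ball y s"
      using d q by metric
    have "x \<in> preimg \<gamma> d q"
      using xy(1) d q unfolding preimg_def by (intro rev_image_eqI[of "(x, y)"]) (auto simp: dist_commute)
    moreover have "x \<notin> bad d q"
      using xy(2) d q by (auto simp: N_def)
    ultimately have "x \<in> Leb (preimg \<gamma> d q)"
      by (simp add: bad_def)
    then show "x \<in> Leb (preimg \<gamma> y s)"
      using Leb_mono[OF preimg_sets_lebesgue[OF sets] preimg_sets_lebesgue[OF sets]
          preimg_mono[OF \<open>ball d q \<subseteq> ball y s\<close>]] by blast
  qed
  ultimately show thesis
    using that by blast
qed

section \<open>Strictly quasiconvex functions\<close>

definition strictly_quasiconvex :: "('a::real_vector \<Rightarrow> 'b::linorder) \<Rightarrow> bool" where
  "strictly_quasiconvex f \<longleftrightarrow>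
    (\<forall>x z t. x \<noteq> z \<longrightarrow> 0 < t \<longrightarrow> t < 1 \<longrightarrow> f ((1 - t) *\<^sub>R x + t *\<^sub>R z) < max (f x) (f z))"

lemma strictly_quasiconvexD:
  "strictly_quasiconvex f \<Longrightarrow> x \<noteq> z \<Longrightarrow> 0 < t \<Longrightarrow> t < 1 \<Longrightarrow>
    f ((1 - t) *\<^sub>R x + t *\<^sub>R z) < max (f x) (f z)"
  by (simp add: strictly_quasiconvex_def)

lemma strictly_quasiconvex_segment_le:
  assumes "strictly_quasiconvex f" "0 \<le> t" "t \<le> 1"
  shows "f (x + t *\<^sub>R (z - x)) \<le> max (f x) (f z)"
proof -
  have eq: "x + t *\<^sub>R (z - x) = (1 - t) *\<^sub>R x + t *\<^sub>R z"
    by (simp add: algebra_simps)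
  show ?thesis
  proof (cases "x = z \<or> t = 0 \<or> t = 1")
    case False
    then show ?thesis
      using strictly_quasiconvexD[OF assms(1), of x z t] assms(2,3) unfolding eq by simp
  qed auto
qed

lemma strictly_quasiconvex_segment_less:
  assumes "strictly_quasiconvex f" "f z < f x" "0 < t" "t \<le> 1"
  shows "f (x + t *\<^sub>R (z - x)) < f x"
proof (cases "t = 1")
  case False
  have "x \<noteq> z" using assms(2) by auto
  moreover have "x + t *\<^sub>R (z - x) = (1 - t) *\<^sub>R x + t *\<^sub>R z"
    by (simp add: algebra_simps)
  moreover have "f ((1 - t) *\<^sub>R x + t *\<^sub>R z) < max (f x) (f z)"
    using strictly_quasiconvexD[OF assms(1) \<open>x \<noteq> z\<close> assms(3)] assms(4) False by simp
  ultimately have "f (x + t *\<^sub>R (z - x)) < max (f x) (f z)"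
    by simp
  then show ?thesis
    using assms(2) by (simp add: max_absorb1)
qed (use assms in simp)

lemma strictly_quasiconvex_extrapolate:
  assumes f: "strictly_quasiconvex f" and "f w < f x" "0 < t"
  shows "f x < f (x + t *\<^sub>R (x - w))"
proof -
  define x' where "x' = x + t *\<^sub>R (x - w)"
  define s where "s = t / (1 + t)"
  have s: "0 < s" "s < 1"
    using \<open>0 < t\<close> by (auto simp: s_def)
  have x: "(1 - s) *\<^sub>R x' + s *\<^sub>R w = x"
    using \<open>0 < t\<close> by (simp add: x'_def s_def field_simps scaleR_add_right scaleR_diff_right
      flip: scaleR_add_left)
  have "x' \<noteq> w"
    using x \<open>f w < f x\<close> by (auto simp flip: scaleR_add_left)
  then have "f x < max (f x') (f w)"
    using strictly_quasiconvexD[OF f _ s] x by metis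
  then show ?thesis
    using \<open>f w < f x\<close> by (auto simp: x'_def less_max_iff_disj)
qed

lemma convex_sublevel_strictly_quasiconvex:
  assumes "strictly_quasiconvex f"
  shows "convex {z. f z \<le> a}"
  unfolding convex_alt
proof (clarsimp)
  fix x z and u :: real assume "f x \<le> a" "f z \<le> a" "0 \<le> u" "u \<le> 1"
  moreover have "(1 - u) *\<^sub>R x + u *\<^sub>R z = x + u *\<^sub>R (z - x)"
    by (simp add: algebra_simps)
  ultimately show "f ((1 - u) *\<^sub>R x + u *\<^sub>R z) \<le> a"
    using strictly_quasiconvex_segment_le[OF assms, of u x z] by (auto simp: le_max_iff_disj)
qed

lemma eventually_ray_in_open:
  fixes x :: "'a::real_normed_vector"
  assumes "open U" "x \<in> U"
  shows "\<forall>\<^sub>F s in at_right 0. x + s *\<^sub>R v \<in> U"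
proof -
  have "((\<lambda>s. x + s *\<^sub>R v) \<longlongrightarrow> x + 0 *\<^sub>R v) (at_right 0)"
    by (intro tendsto_intros)
  then show ?thesis
    using assms by (simp add: topological_tendstoD)
qed

lemma frontier_sublevel_strictly_quasiconvex:
  fixes f :: "'a::real_normed_vector \<Rightarrow> 'b::linorder"
  assumes f: "strictly_quasiconvex f" and "f x = a" "f w < a"
  shows "x \<in> frontier {z. f z \<le> a}"
proof -
  have "x \<notin> interior {z. f z \<le> a}"
  proof
    assume "x \<in> interior {z. f z \<le> a}"
    then have "\<forall>\<^sub>F s in at_right 0. x + s *\<^sub>R (x - w) \<in> interior {z. f z \<le> a} \<and> 0 < s"
      by (intro eventually_conj eventually_ray_in_open[OF open_interior] eventually_at_right_less)
    then obtain s where "x + s *\<^sub>R (x - w) \<in> interior {z. f z \<le> a}" "0 < s"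
      using eventually_happens'[OF trivial_limit_at_right_real] by blast
    then have "f (x + s *\<^sub>R (x - w)) \<le> a" "0 < s"
      using interior_subset by blast+
    then show False
      using strictly_quasiconvex_extrapolate[OF f, of w x s] assms by simp
  qed
  moreover have "x \<in> closure {z. f z \<le> a}"
    by (rule subsetD[OF closure_subset]) (simp add: assms(2))
  ultimately show ?thesis
    by (simp add: frontier_def)
qed

section \<open>Outer normals of convex sets with \<open>C\<^sup>1\<close> boundary\<close>

lemma inner_less_one_if_unit_neq:
  fixes a b :: "'a::real_inner"
  assumes "norm a = 1" "norm b = 1" "a \<noteq> b"
  shows "a \<bullet> b < 1"
proof -
  have "a \<bullet> a = 1" "b \<bullet> b = 1"
    using assms(1,2) by (simp_all add: norm_eq_1)
  have "0 < (norm (a - b))\<^sup>2" using assms(3) by simp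
  also have "(norm (a - b))\<^sup>2 = 2 - 2 * (a \<bullet> b)"
    using \<open>a \<bullet> a = 1\<close> \<open>b \<bullet> b = 1\<close> by (simp add: power2_norm_eq_inner inner_diff inner_commute)
  finally show ?thesis by simp
qed

lemma has_derivative_ray_quotient:
  fixes g :: "'a::real_inner \<Rightarrow> real"
  assumes "(g has_derivative (\<lambda>h. G \<bullet> h)) (at x)"
  shows "((\<lambda>s. (g (x + s *\<^sub>R v) - g x) / s) \<longlongrightarrow> G \<bullet> v) (at_right 0)"
proof -
  have "((\<lambda>s. x + s *\<^sub>R v) has_derivative (\<lambda>s. s *\<^sub>R v)) (at 0)"
    by (auto intro!: derivative_eq_intros)
  moreover have "(g has_derivative (\<lambda>h. G \<bullet> h)) (at (x + 0 *\<^sub>R v))"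
    using assms by simp
  ultimately have "((\<lambda>s. g (x + s *\<^sub>R v)) has_derivative (\<lambda>s. G \<bullet> (s *\<^sub>R v))) (at 0)"
    by (rule has_derivative_compose)
  moreover have "(\<lambda>s. G \<bullet> (s *\<^sub>R v)) = (*) (G \<bullet> v)"
    by (auto simp: mult.commute)
  ultimately have "((\<lambda>s. g (x + s *\<^sub>R v)) has_real_derivative G \<bullet> v) (at 0)"
    by (simp add: has_field_derivative_def)
  then show ?thesis
    by (simp add: has_field_derivative_iff filterlim_at_split)
qed

lemma eventually_nhds_imp_interior:
  assumes "\<forall>\<^sub>F z in nhds x. z \<in> S"
  shows "x \<in> interior S"
  using assms unfolding eventually_nhds by (auto intro: interiorI)

lemma local_sublevel_frontier_eq_0:
  fixes g :: "'a::t2_space \<Rightarrow> real"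
  assumes U: "open U" "x \<in> U" and "isCont g x" and CU: "C \<inter> U = {z \<in> U. g z \<le> 0}"
    and "x \<in> frontier C"
  shows "g x = 0"
proof -
  have memC: "z \<in> C \<longleftrightarrow> g z \<le> 0" if "z \<in> U" for z
    using CU that by blast
  have g: "(g \<longlongrightarrow> g x) (at x)"
    using \<open>isCont g x\<close> by (simp add: isCont_def)
  have near: "\<forall>\<^sub>F z in nhds x. z \<in> U"
    by (rule eventually_nhds_in_open[OF U])
  show ?thesis
  proof (rule ccontr)
    assume "g x \<noteq> 0"
    then consider "g x < 0" | "g x > 0" by linarith
    then show False
    proof cases
      case 1
      then have "\<forall>\<^sub>F z in nhds x. g z < 0"
        using order_tendstoD(2)[OF g] by (simp add: eventually_nhds_conv_at)
      with near have "\<forall>\<^sub>F z in nhds x. z \<in> C"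
        by eventually_elim (simp add: memC)
      then have "x \<in> interior C"
        by (rule eventually_nhds_imp_interior)
      then show False
        using \<open>x \<in> frontier C\<close> by (simp add: frontier_def)
    next
      case 2
      then have "\<forall>\<^sub>F z in nhds x. g z > 0"
        using order_tendstoD(1)[OF g] by (simp add: eventually_nhds_conv_at)
      with near have "\<forall>\<^sub>F z in nhds x. z \<in> - C"
        by eventually_elim (simp add: memC)
      then have "x \<in> interior (- C)"
        by (rule eventually_nhds_imp_interior)
      then show False
        using \<open>x \<in> frontier C\<close> by (simp add: frontier_def closure_interior)
    qed
  qed
qed

lemma C1_boundary_frontier_gradient:
  fixes C :: "'a::euclidean_space set"
  assumes "C1_boundary C" "x \<in> frontier C"
  obtains G where "G \<noteq> 0" "x \<in> C"
    "\<And>h. G \<bullet> h < 0 \<Longrightarrow> \<forall>\<^sub>F s in at_right 0. x + s *\<^sub>R h \<in> C"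
    "\<And>h. G \<bullet> h > 0 \<Longrightarrow> \<forall>\<^sub>F s in at_right 0. x + s *\<^sub>R h \<notin> C"
proof -
  have "\<exists>U g G. open U \<and> x \<in> U \<and> (\<forall>z\<in>U. (g has_derivative (\<lambda>h. G z \<bullet> h)) (at z)) \<and>
      continuous_on U G \<and> G x \<noteq> 0 \<and> C \<inter> U = {z \<in> U. g z \<le> (0::real)}"
    using assms(2) by (rule bspec[OF assms(1)[unfolded C1_boundary_def]])
  then obtain U g G where U: "open U" "x \<in> U"
    and deriv: "\<And>z. z \<in> U \<Longrightarrow> (g has_derivative (\<lambda>h. G z \<bullet> h)) (at z)"
    and "G x \<noteq> 0" and CU: "C \<inter> U = {z \<in> U. g z \<le> 0}"
    by blast
  have memC: "z \<in> C \<longleftrightarrow> g z \<le> 0" if "z \<in> U" for z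
    using CU that by blast
  have "g x = 0"
    using has_derivative_continuous[OF deriv[OF U(2)]]
    by (rule local_sublevel_frontier_eq_0[OF U _ CU assms(2)])
  then have quotient: "((\<lambda>s. g (x + s *\<^sub>R h) / s) \<longlongrightarrow> G x \<bullet> h) (at_right 0)" for h
    using has_derivative_ray_quotient[OF deriv[OF U(2)], of h] by simp
  show thesis
  proof
    show "G x \<noteq> 0" by fact
    show "x \<in> C" using memC[OF U(2)] \<open>g x = 0\<close> by simp
  next
    fix h assume "G x \<bullet> h < 0"
    with quotient[of h] have "\<forall>\<^sub>F s in at_right 0. g (x + s *\<^sub>R h) / s < 0"
      by (rule order_tendstoD)
    with eventually_ray_in_open[OF U, of h] eventually_at_right_less
    show "\<forall>\<^sub>F s in at_right 0. x + s *\<^sub>R h \<in> C"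
      by eventually_elim (simp add: memC divide_less_0_iff)
  next
    fix h assume "G x \<bullet> h > 0"
    with quotient[of h] have "\<forall>\<^sub>F s in at_right 0. g (x + s *\<^sub>R h) / s > 0"
      by (rule order_tendstoD)
    with eventually_ray_in_open[OF U, of h] eventually_at_right_less
    show "\<forall>\<^sub>F s in at_right 0. x + s *\<^sub>R h \<notin> C"
      by eventually_elim (simp add: memC zero_less_divide_iff)
  qed
qed

lemma inner_eq_norm_mult_inner_sgn: "G \<bullet> h = norm G * (sgn G \<bullet> h)"
  by (cases "G = 0") (simp_all add: sgn_div_norm)

lemma convex_supporting_sgn:
  assumes "convex C" "x \<in> C" "z \<in> C"
    and outward: "\<And>h. G \<bullet> h > 0 \<Longrightarrow> \<forall>\<^sub>F s in at_right 0. x + s *\<^sub>R h \<notin> C"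
  shows "sgn G \<bullet> (z - x) \<le> 0"
proof (rule ccontr)
  assume "\<not> sgn G \<bullet> (z - x) \<le> 0"
  moreover from this have "G \<noteq> 0"
    by auto
  ultimately have "G \<bullet> (z - x) > 0"
    using inner_eq_norm_mult_inner_sgn[of G "z - x"] by simp
  then have "\<forall>\<^sub>F s in at_right 0. x + s *\<^sub>R (z - x) \<notin> C \<and> s \<in> {0<..<1}"
    by (intro eventually_conj outward eventually_at_right_real) simp_all
  then obtain s where "x + s *\<^sub>R (z - x) \<notin> C" "s \<in> {0<..<1}"
    using eventually_happens'[OF trivial_limit_at_right_real] by blast
  moreover have "x + s *\<^sub>R (z - x) = (1 - s) *\<^sub>R x + s *\<^sub>R z"
    by (simp add: algebra_simps)
  ultimately show False
    using assms(1-3) by (auto simp: convex_alt)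
qed

lemma supporting_unit_normal_unique:
  assumes "G \<noteq> 0" and inward: "\<And>h. G \<bullet> h < 0 \<Longrightarrow> \<forall>\<^sub>F s in at_right 0. x + s *\<^sub>R h \<in> C"
    and "norm n = 1" and supporting: "\<forall>z\<in>C. n \<bullet> (z - x) \<le> 0"
  shows "n = sgn G"
proof (rule ccontr)
  assume "n \<noteq> sgn G"
  moreover have "norm (sgn G) = 1"
    using \<open>G \<noteq> 0\<close> by (simp add: norm_sgn)
  ultimately have "n \<bullet> sgn G < 1"
    using inner_less_one_if_unit_neq \<open>norm n = 1\<close> by blast
  have "sgn G \<bullet> sgn G = 1" "n \<bullet> n = 1"
    using \<open>norm n = 1\<close> \<open>norm (sgn G) = 1\<close> by (simp_all add: norm_eq_1)
  then have "G \<bullet> (n - sgn G) = norm G * (n \<bullet> sgn G - 1)"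
    using inner_eq_norm_mult_inner_sgn[of G "n - sgn G"] by (simp add: inner_diff_right inner_commute)
  then have "G \<bullet> (n - sgn G) < 0"
    using \<open>n \<bullet> sgn G < 1\<close> \<open>G \<noteq> 0\<close> by (simp add: mult_pos_neg)
  have n_pos: "n \<bullet> (n - sgn G) > 0"
    using \<open>n \<bullet> n = 1\<close> \<open>n \<bullet> sgn G < 1\<close> by (simp add: inner_diff_right)
  have "\<forall>\<^sub>F s in at_right 0. x + s *\<^sub>R (n - sgn G) \<in> C \<and> 0 < s"
    using \<open>G \<bullet> (n - sgn G) < 0\<close>
    by (intro eventually_conj inward eventually_at_right_less)
  then obtain s where "x + s *\<^sub>R (n - sgn G) \<in> C" "0 < s"
    using eventually_happens'[OF trivial_limit_at_right_real] by blast
  then have "s * (n \<bullet> (n - sgn G)) \<le> 0"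
    using supporting by fastforce
  then show False
    using \<open>0 < s\<close> n_pos by (simp add: mult_le_0_iff)
qed

lemma outer_normal_convex_C1_boundary:
  fixes C :: "'a::euclidean_space set"
  assumes "convex C" "C1_boundary C" "x \<in> frontier C"
  shows "norm (outer_normal C x) = 1"
    and "v \<bullet> outer_normal C x < 0 \<Longrightarrow> \<forall>\<^sub>F s in at_right 0. x + s *\<^sub>R v \<in> C"
proof -
  obtain G where "G \<noteq> 0" "x \<in> C"
    and inward: "\<And>h. G \<bullet> h < 0 \<Longrightarrow> \<forall>\<^sub>F s in at_right 0. x + s *\<^sub>R h \<in> C"
    and outward: "\<And>h. G \<bullet> h > 0 \<Longrightarrow> \<forall>\<^sub>F s in at_right 0. x + s *\<^sub>R h \<notin> C"
    using C1_boundary_frontier_gradient[OF assms(2,3)] by blast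
  have "outer_normal C x = sgn G"
    unfolding outer_normal_def
  proof (rule the_equality)
    show "norm (sgn G) = 1 \<and> (\<forall>z\<in>C. sgn G \<bullet> (z - x) \<le> 0)"
      using convex_supporting_sgn[OF assms(1) \<open>x \<in> C\<close> _ outward] \<open>G \<noteq> 0\<close> by (simp add: norm_sgn)
  qed (use supporting_unit_normal_unique[OF \<open>G \<noteq> 0\<close> inward] in blast)
  then show "norm (outer_normal C x) = 1"
    and "v \<bullet> outer_normal C x < 0 \<Longrightarrow> \<forall>\<^sub>F s in at_right 0. x + s *\<^sub>R v \<in> C"
    using \<open>G \<noteq> 0\<close> inner_eq_norm_mult_inner_sgn[of G v]
    by (auto intro!: inward simp: norm_sgn inner_commute mult_pos_neg)
qed

lemma strictly_quasiconvex_descent: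
  fixes f :: "'a::euclidean_space \<Rightarrow> real"
  assumes f: "strictly_quasiconvex f" and C1: "C1_boundary {z. f z \<le> a}"
    and "f x = a" "f w < a"
  shows "norm (outer_normal {z. f z \<le> a} x) = 1"
    and "v \<bullet> outer_normal {z. f z \<le> a} x < 0 \<Longrightarrow> \<forall>\<^sub>F s in at_right 0. f (x + s *\<^sub>R v) < a"
proof -
  note normal = outer_normal_convex_C1_boundary[OF convex_sublevel_strictly_quasiconvex[OF f] C1
      frontier_sublevel_strictly_quasiconvex[OF f assms(3,4)]]
  show "norm (outer_normal {z. f z \<le> a} x) = 1"
    by (rule normal(1))
  assume v: "v \<bullet> outer_normal {z. f z \<le> a} x < 0"
  then obtain d where "d > 0" and d: "\<And>s. 0 < s \<Longrightarrow> s < d \<Longrightarrow> f (x + s *\<^sub>R v) \<le> a"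
    using normal(2)[OF v] by (auto simp: eventually_at_right_field)
  have "f (x + s *\<^sub>R v) < a" if "0 < s" "s < d / 2" for s
  proof -
    have "v \<noteq> 0" using v by auto
    then have "x \<noteq> x + (2 * s) *\<^sub>R v" using \<open>0 < s\<close> by simp
    from strictly_quasiconvexD[OF f this, of "1/2"]
    have "f ((1 - 1/2) *\<^sub>R x + (1/2) *\<^sub>R (x + (2 * s) *\<^sub>R v)) < max (f x) (f (x + (2 * s) *\<^sub>R v))"
      by simp
    moreover have "(1 - 1/2) *\<^sub>R x + (1/2) *\<^sub>R (x + (2 * s) *\<^sub>R v) = x + s *\<^sub>R v"
      by (simp add: algebra_simps flip: scaleR_add_left)
    ultimately have "f (x + s *\<^sub>R v) < max (f x) (f (x + (2 * s) *\<^sub>R v))"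
      by simp
    then show ?thesis
      using d[of "2 * s"] that \<open>f x = a\<close> by (simp add: less_max_iff_disj)
  qed
  then show "\<forall>\<^sub>F s in at_right 0. f (x + s *\<^sub>R v) < a"
    using \<open>d > 0\<close> by (auto simp: eventually_at_right_field intro!: exI[of _ "d / 2"])
qed

section \<open>Cones of improving pairs\<close>

lemma tendsto_continuous_on_UNIV_pair:
  assumes "continuous_on UNIV (\<lambda>(x, y). c x y)" "(f \<longlongrightarrow> a) F" "(g \<longlongrightarrow> b) F"
  shows "((\<lambda>z. c (f z) (g z)) \<longlongrightarrow> c a b) F"
  using continuous_on_tendsto_compose[OF assms(1) tendsto_Pair[OF assms(2,3)]] by simp

lemma cone_filter_limits:
  fixes p x :: "'a::real_normed_vector" and y0 :: "'b::topological_space"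
  shows "\<forall>\<^sub>F z in at_right (0::real) \<times>\<^sub>F nhds (p, y0). 0 < fst z \<and> fst z < 1"
    and "((\<lambda>z. fst (snd z)) \<longlongrightarrow> p) (at_right (0::real) \<times>\<^sub>F nhds (p, y0))"
    and "((\<lambda>z. snd (snd z)) \<longlongrightarrow> y0) (at_right (0::real) \<times>\<^sub>F nhds (p, y0))"
    and "((\<lambda>z. x + fst z *\<^sub>R (fst (snd z) - x)) \<longlongrightarrow> x) (at_right (0::real) \<times>\<^sub>F nhds (p, y0))"
proof -
  have t: "filterlim fst (at_right 0) (at_right (0::real) \<times>\<^sub>F nhds (p, y0))"
    by (rule filterlim_fst)
  have qy: "(snd \<longlongrightarrow> (p, y0)) (at_right (0::real) \<times>\<^sub>F nhds (p, y0))"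
    by (rule filterlim_snd)
  show "\<forall>\<^sub>F z in at_right (0::real) \<times>\<^sub>F nhds (p, y0). 0 < fst z \<and> fst z < 1"
    using filterlim_iff[THEN iffD1, OF t, rule_format, OF eventually_at_right_real[of 0 1]] by simp
  show "((\<lambda>z. fst (snd z)) \<longlongrightarrow> p) (at_right (0::real) \<times>\<^sub>F nhds (p, y0))"
    and "((\<lambda>z. snd (snd z)) \<longlongrightarrow> y0) (at_right (0::real) \<times>\<^sub>F nhds (p, y0))"
    using tendsto_fst[OF qy] tendsto_snd[OF qy] by simp_all
  have "(fst \<longlongrightarrow> 0) (at_right (0::real) \<times>\<^sub>F nhds (p, y0))"
    using filterlim_mono[OF t at_within_le_nhds order_refl] .
  from tendsto_add[OF tendsto_const tendsto_scaleR[OF this tendsto_diff[OF tendsto_fst[OF qy] tendsto_const]]]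
  show "((\<lambda>z. x + fst z *\<^sub>R (fst (snd z) - x)) \<longlongrightarrow> x) (at_right (0::real) \<times>\<^sub>F nhds (p, y0))"
    by simp
qed

lemma eventually_cone_filterE:
  fixes p :: "'a::metric_space" and y0 :: "'b::metric_space"
  assumes "\<forall>\<^sub>F (t, q, y) in at_right (0::real) \<times>\<^sub>F nhds (p, y0). P t q y"
  obtains \<tau> \<delta> r where "\<tau> > 0" "\<delta> > 0" "r > 0"
    "\<And>t q y. 0 < t \<Longrightarrow> t \<le> \<tau> \<Longrightarrow> q \<in> ball p \<delta> \<Longrightarrow> y \<in> ball y0 r \<Longrightarrow> P t q y"
proof -
  obtain Pt Pq Py where "eventually Pt (at_right 0)" "eventually Pq (nhds p)" "eventually Py (nhds y0)"
    and P: "\<And>t q y. Pt t \<Longrightarrow> Pq q \<Longrightarrow> Py y \<Longrightarrow> P t q y"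
    using assms unfolding nhds_prod eventually_prod_filter by fastforce
  then obtain b \<delta> r where "b > 0" "\<And>t. 0 < t \<Longrightarrow> t < b \<Longrightarrow> Pt t"
    and "\<delta> > 0" "\<And>q. dist q p < \<delta> \<Longrightarrow> Pq q" and "r > 0" "\<And>y. dist y y0 < r \<Longrightarrow> Py y"
    unfolding eventually_at_right_field eventually_nhds_metric by blast
  then show thesis
    using P by (intro that[of "b / 2" \<delta> r]) (auto simp: dist_commute)
qed

lemma regular_pts_in_cone:
  fixes \<gamma> :: "('a::euclidean_space \<times> 'a) measure"
  assumes sets: "sets \<gamma> = sets borel" and reg: "(x, y0) \<in> regular_pts \<gamma>"
    and A: "A \<in> sets lebesgue" "x \<in> Leb A"
    and cone: "\<forall>\<^sub>F (t, q, y') in at_right 0 \<times>\<^sub>F nhds (p, y0). P (x + t *\<^sub>R (q - x)) y'"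
  shows "\<exists>(x', y') \<in> regular_pts \<gamma>. x' \<in> A \<and> P x' y'"
proof -
  obtain \<tau> \<delta> r where "\<tau> > 0" "\<delta> > 0" "r > 0" and uniform:
      "\<And>t q y'. 0 < t \<Longrightarrow> t \<le> \<tau> \<Longrightarrow> q \<in> ball p \<delta> \<Longrightarrow> y' \<in> ball y0 r \<Longrightarrow>
        P (x + t *\<^sub>R (q - x)) y'"
    using eventually_cone_filterE[OF cone] by blast
  obtain N where "negligible N"
    and regular: "\<And>x' y'. (x', y') \<in> msupp \<gamma> \<Longrightarrow> x' \<notin> N \<Longrightarrow> (x', y') \<in> regular_pts \<gamma>"
    using regular_pts_almost_everywhere[OF sets] by blast
  have P_meas: "preimg \<gamma> y0 r \<in> sets lebesgue"
    by (rule preimg_sets_lebesgue[OF sets])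
  have "x \<in> Leb (preimg \<gamma> y0 r \<inter> A)"
    using reg \<open>r > 0\<close> by (intro Leb_Int[OF P_meas A(1) _ A(2)]) (simp add: regular_pts_def)
  then obtain t q where t: "0 < t" "t \<le> \<tau>" and "q \<in> ball p \<delta>"
    and x': "x + t *\<^sub>R (q - x) \<in> preimg \<gamma> y0 r \<inter> A - N"
    using Leb_meets_cone[OF sets.Int[OF P_meas A(1)] _ \<open>negligible N\<close> \<open>\<delta> > 0\<close> \<open>\<tau> > 0\<close>] by blast
  then obtain y' where "y' \<in> ball y0 r" "(x + t *\<^sub>R (q - x), y') \<in> msupp \<gamma>"
    by (auto simp: preimg_def)
  then show ?thesis
    using regular x' uniform[OF t \<open>q \<in> ball p \<delta>\<close>] by blast
qed

lemma eventually_cone_below: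
  fixes c :: "'a::real_normed_vector \<Rightarrow> 'b::topological_space \<Rightarrow> real"
  assumes cont: "continuous_on UNIV (\<lambda>(x, y). c x y)"
    and sqc: "strictly_quasiconvex (\<lambda>z. c z y)" and below: "c p y < c x y"
  shows "\<forall>\<^sub>F (t, q, y') in at_right 0 \<times>\<^sub>F nhds (p, y0). c (x + t *\<^sub>R (q - x)) y < c x y"
proof -
  have "((\<lambda>z. c (fst (snd z)) y) \<longlongrightarrow> c p y) (at_right (0::real) \<times>\<^sub>F nhds (p, y0))"
    by (intro tendsto_continuous_on_UNIV_pair[OF cont] cone_filter_limits tendsto_const)
  from order_tendstoD(2)[OF this below] cone_filter_limits(1)
  show ?thesis
    by eventually_elim (auto intro: strictly_quasiconvex_segment_less[OF sqc])
qed

lemma eventually_cone_above: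
  fixes c :: "'a::real_normed_vector \<Rightarrow> 'b::topological_space \<Rightarrow> real"
  assumes cont: "continuous_on UNIV (\<lambda>(x, y). c x y)"
    and sqc: "\<And>y. strictly_quasiconvex (\<lambda>z. c z y)" and below: "c (x - (p - x)) y0 < c x y0"
  shows "\<forall>\<^sub>F (t, q, y') in at_right 0 \<times>\<^sub>F nhds (p, y0). c x y' < c (x + t *\<^sub>R (q - x)) y'"
proof -
  have "((\<lambda>z. c (x - (fst (snd z) - x)) (snd (snd z)) - c x (snd (snd z)))
      \<longlongrightarrow> c (x - (p - x)) y0 - c x y0) (at_right (0::real) \<times>\<^sub>F nhds (p, y0))"
    by (intro tendsto_diff tendsto_continuous_on_UNIV_pair[OF cont] cone_filter_limits tendsto_intros)
  moreover have "c (x - (p - x)) y0 - c x y0 < 0"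
    using below by simp
  ultimately have "\<forall>\<^sub>F z in at_right (0::real) \<times>\<^sub>F nhds (p, y0).
      c (x - (fst (snd z) - x)) (snd (snd z)) - c x (snd (snd z)) < 0"
    by (rule order_tendstoD(2))
  with cone_filter_limits(1) show ?thesis
  proof eventually_elim
    case (elim z)
    obtain t q y' where "z = (t, q, y')" by (cases z) auto
    with elim show ?case
      using strictly_quasiconvex_extrapolate[OF sqc, of "x - (q - x)" y' x t] by simp
  qed
qed

lemma improving_cone_if_less:
  fixes c :: "'a::real_normed_vector \<Rightarrow> 'b::topological_space \<Rightarrow> real"
  assumes cont: "continuous_on UNIV (\<lambda>(x, y). c x y)"
    and sqc: "strictly_quasiconvex (\<lambda>z. c z y)" and "c p y < c x y" and "c x y0 < c x y"
  shows "\<forall>\<^sub>F (t, q, y') in at_right 0 \<times>\<^sub>F nhds (p, y0).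
    max (c (x + t *\<^sub>R (q - x)) y) (c x y') < max (c x y) (c (x + t *\<^sub>R (q - x)) y')"
proof -
  have "((\<lambda>z. c x (snd (snd z))) \<longlongrightarrow> c x y0) (at_right (0::real) \<times>\<^sub>F nhds (p, y0))"
    by (intro tendsto_continuous_on_UNIV_pair[OF cont] cone_filter_limits tendsto_const)
  from order_tendstoD(2)[OF this \<open>c x y0 < c x y\<close>]
    eventually_cone_below[OF cont sqc \<open>c p y < c x y\<close>, of y0]
  show ?thesis
    by eventually_elim (auto simp: less_max_iff_disj)
qed

lemma improving_cone_if_greater:
  fixes c :: "'a::real_normed_vector \<Rightarrow> 'b::topological_space \<Rightarrow> real"
  assumes cont: "continuous_on UNIV (\<lambda>(x, y). c x y)"
    and sqc: "\<And>y. strictly_quasiconvex (\<lambda>z. c z y)" and "c w y0 < c x y0" and "c x y < c x y0"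
  shows "\<forall>\<^sub>F (t, q, y') in at_right 0 \<times>\<^sub>F nhds (x - (w - x), y0).
    max (c (x + t *\<^sub>R (q - x)) y) (c x y') < max (c x y) (c (x + t *\<^sub>R (q - x)) y')"
proof -
  let ?F = "at_right (0::real) \<times>\<^sub>F nhds (x - (w - x), y0)"
  let ?x' = "\<lambda>z. x + fst z *\<^sub>R (fst (snd z) - x)"
  have "((\<lambda>z. c (?x' z) (snd (snd z)) - c (?x' z) y) \<longlongrightarrow> c x y0 - c x y) ?F"
    by (intro tendsto_diff tendsto_continuous_on_UNIV_pair[OF cont] cone_filter_limits tendsto_const)
  moreover have "0 < c x y0 - c x y"
    using \<open>c x y < c x y0\<close> by simp
  ultimately have "\<forall>\<^sub>F z in ?F. 0 < c (?x' z) (snd (snd z)) - c (?x' z) y"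
    by (rule order_tendstoD(1))
  moreover have "c (x - ((x - (w - x)) - x)) y0 < c x y0"
    using \<open>c w y0 < c x y0\<close> by simp
  note eventually_cone_above[OF cont sqc this]
  ultimately show ?thesis
    by eventually_elim (auto simp: less_max_iff_disj)
qed

lemma improving_cone_if_equal:
  fixes c :: "'a::euclidean_space \<Rightarrow> 'b::topological_space \<Rightarrow> real"
  assumes cont: "continuous_on UNIV (\<lambda>(x, y). c x y)"
    and sqc: "\<And>y. strictly_quasiconvex (\<lambda>z. c z y)"
    and C1: "C1_boundary {z. c z y \<le> a}" "C1_boundary {z. c z y0 \<le> a}"
    and "c z y < a" "c z0 y0 < a" and "c x y = a" "c x y0 = a"
    and normals: "outer_normal {z. c z y \<le> a} x \<noteq> outer_normal {z. c z y0 \<le> a} x"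
  shows "\<exists>p. \<forall>\<^sub>F (t, q, y') in at_right 0 \<times>\<^sub>F nhds (p, y0).
    max (c (x + t *\<^sub>R (q - x)) y) (c x y') < max (c x y) (c (x + t *\<^sub>R (q - x)) y')"
proof -
  define n where "n = outer_normal {z. c z y \<le> a} x"
  define m where "m = outer_normal {z. c z y0 \<le> a} x"
  note descent_y = strictly_quasiconvex_descent[OF sqc C1(1) \<open>c x y = a\<close> \<open>c z y < a\<close>, folded n_def]
  note descent_y0 = strictly_quasiconvex_descent[OF sqc C1(2) \<open>c x y0 = a\<close> \<open>c z0 y0 < a\<close>, folded m_def]
  have "m \<noteq> n"
    using normals by (simp add: n_def m_def)
  then have "m \<bullet> n < 1"
    by (rule inner_less_one_if_unit_neq[OF descent_y0(1) descent_y(1)])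
  moreover have "n \<bullet> n = 1" "m \<bullet> m = 1"
    using descent_y(1) descent_y0(1) by (simp_all add: norm_eq_1)
  ultimately have "(m - n) \<bullet> n < 0" "(n - m) \<bullet> m < 0"
    by (simp_all add: inner_diff_left inner_commute[of n m])
  then have "\<forall>\<^sub>F s in at_right 0. c (x + s *\<^sub>R (m - n)) y < a \<and> c (x + s *\<^sub>R (n - m)) y0 < a"
    by (intro eventually_conj descent_y(2) descent_y0(2))
  then obtain s where s: "c (x + s *\<^sub>R (m - n)) y < a" "c (x + s *\<^sub>R (n - m)) y0 < a"
    using eventually_happens'[OF trivial_limit_at_right_real] by blast
  define p where "p = x + s *\<^sub>R (m - n)"
  have "c p y < c x y" "c (x - (p - x)) y0 < c x y0"
    using s \<open>c x y = a\<close> \<open>c x y0 = a\<close> by (simp_all add: p_def algebra_simps)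
  from eventually_cone_below[OF cont sqc this(1), of y0] eventually_cone_above[OF cont sqc this(2)]
  have "\<forall>\<^sub>F (t, q, y') in at_right 0 \<times>\<^sub>F nhds (p, y0).
      max (c (x + t *\<^sub>R (q - x)) y) (c x y') < max (c x y) (c (x + t *\<^sub>R (q - x)) y')"
    by eventually_elim (auto simp: less_max_iff_disj)
  then show ?thesis ..
qed

lemma exists_improving_cone:
  fixes c :: "'a::euclidean_space \<Rightarrow> 'a \<Rightarrow> real"
  assumes nonneg: "\<And>x y. c x y \<ge> 0"
    and cont: "continuous_on UNIV (\<lambda>(x, y). c x y)"
    and unique_zero: "\<And>x. \<exists>!y. c x y = 0"
    and inf_zero: "\<And>y. (INF x. c x y) = 0"
    and sqc: "\<And>y. strictly_quasiconvex (\<lambda>z. c z y)"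
    and C1: "\<And>a y. a > 0 \<Longrightarrow> C1_boundary {z. c z y \<le> a}"
    and normals: "\<And>x y y' a. a > 0 \<Longrightarrow> c x y = a \<Longrightarrow> c x y' = a \<Longrightarrow>
      outer_normal {z. c z y \<le> a} x = outer_normal {z. c z y' \<le> a} x \<Longrightarrow> y = y'"
    and "y \<noteq> yt"
  shows "\<exists>p. \<forall>\<^sub>F (t, q, y') in at_right 0 \<times>\<^sub>F nhds (p, yt).
    max (c (x + t *\<^sub>R (q - x)) y) (c x y') < max (c x y) (c (x + t *\<^sub>R (q - x)) y')"
proof -
  have below: "\<exists>z. c z w < a" if "a > 0" for w a
    using cInf_lessD[of "range (\<lambda>z. c z w)" a] inf_zero[of w] that by auto
  consider "c x yt < c x y" | "c x y < c x yt" | "c x y = c x yt"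
    by linarith
  then show ?thesis
  proof cases
    case 1
    then obtain z where "c z y < c x y"
      using below nonneg[of x yt] by fastforce
    then show ?thesis
      using improving_cone_if_less[OF cont sqc _ 1] by blast
  next
    case 2
    then obtain w where "c w yt < c x yt"
      using below nonneg[of x y] by fastforce
    then show ?thesis
      using improving_cone_if_greater[OF cont sqc _ 2] by blast
  next
    case 3
    have "c x y > 0"
      using unique_zero[of x] nonneg[of x y] 3 \<open>y \<noteq> yt\<close> by (metis order.not_eq_order_implies_strict)
    then obtain z z0 where "c z y < c x y" "c z0 yt < c x y"
      using below by blast
    moreover have "outer_normal {z. c z y \<le> c x y} x \<noteq> outer_normal {z. c z yt \<le> c x y} x"
      using normals[OF \<open>c x y > 0\<close> refl 3[symmetric]] \<open>y \<noteq> yt\<close> by blast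
    ultimately show ?thesis
      using 3 by (intro improving_cone_if_equal[OF cont sqc C1 C1]) (use \<open>c x y > 0\<close> in auto)
  qed
qed

theorem theorem2p17:
  fixes \<mu> \<nu> :: "'a::euclidean_space measure"
    and c :: "'a \<Rightarrow> 'a \<Rightarrow> real"
    and \<gamma> :: "('a \<times> 'a) measure"
    and x yt :: 'a
  assumes mu: "borel_prob \<mu>" and nu: "borel_prob \<nu>"
    and cpt_mu: "compact (msupp \<mu>)" and cpt_nu: "compact (msupp \<nu>)"
    and ac: "absolutely_continuous lborel \<mu>"
    and c_nonneg: "\<And>x y. c x y \<ge> 0"
    and c_cont: "continuous_on UNIV (\<lambda>(x, y). c x y)"
    and c_i1: "\<And>x. \<exists>!y. c x y = 0"
    and c_i2: "\<And>y. (INF x. c x y) = 0"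
    and c_ii: "\<And>y x xb t. x \<noteq> xb \<Longrightarrow> 0 < t \<Longrightarrow> t < 1 \<Longrightarrow>
                 c ((1 - t) *\<^sub>R x + t *\<^sub>R xb) y < max (c x y) (c xb y)"
    and c_iii: "\<And>lam y. lam > 0 \<Longrightarrow> C1_boundary {z. c z y \<le> lam}"
    and c_iv: "\<And>x y yb lam. lam > 0 \<Longrightarrow> c x y = lam \<Longrightarrow> c x yb = lam \<Longrightarrow>
                 outer_normal {z. c z y \<le> lam} x = outer_normal {z. c z yb \<le> lam} x \<Longrightarrow> y = yb"
    and gam: "\<gamma> \<in> couplings \<mu> \<nu>"
    and reg: "(x, yt) \<in> regular_pts \<gamma>"
  shows "(\<forall>y. y \<noteq> yt \<longrightarrow> (\<exists>(x', y') \<in> regular_pts \<gamma>.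
            max (c x' y) (c x y') < max (c x y) (c x' y'))) \<and>
         (\<forall>A \<in> sets borel. x \<in> Leb A \<longrightarrow> (\<forall>y. y \<noteq> yt \<longrightarrow> (\<exists>(x', y') \<in> regular_pts \<gamma>.
            x' \<in> A \<and> max (c x' y) (c x y') < max (c x y) (c x' y'))))"
proof -
  have sets: "sets \<gamma> = sets borel"
    using gam by (simp add: couplings_def borel_prob_def)
  have sqc: "strictly_quasiconvex (\<lambda>z. c z y)" for y
    using c_ii by (simp add: strictly_quasiconvex_def)
  have improving: "\<exists>(x', y') \<in> regular_pts \<gamma>. x' \<in> A \<and> max (c x' y) (c x y') < max (c x y) (c x' y')"
    if "A \<in> sets lebesgue" "x \<in> Leb A" "y \<noteq> yt" for A y
  proof -
    have "\<exists>p. \<forall>\<^sub>F (t, q, y') in at_right 0 \<times>\<^sub>F nhds (p, yt).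
        max (c (x + t *\<^sub>R (q - x)) y) (c x y') < max (c x y) (c (x + t *\<^sub>R (q - x)) y')"
      by (rule exists_improving_cone[OF c_nonneg c_cont c_i1 c_i2 sqc _ _ \<open>y \<noteq> yt\<close>])
        (fact c_iii, fact c_iv)
    then obtain p where "\<forall>\<^sub>F (t, q, y') in at_right 0 \<times>\<^sub>F nhds (p, yt).
        max (c (x + t *\<^sub>R (q - x)) y) (c x y') < max (c x y) (c (x + t *\<^sub>R (q - x)) y')" ..
    then show ?thesis
      by (rule regular_pts_in_cone[OF sets reg that(1,2)])
  qed
  show ?thesis
  proof (intro conjI ballI allI impI)
    fix y assume "y \<noteq> yt"
    then show "\<exists>(x', y') \<in> regular_pts \<gamma>. max (c x' y) (c x y') < max (c x y) (c x' y')"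
      using improving[OF _ Leb_UNIV] by fastforce
  next
    fix A y assume "A \<in> sets borel" "x \<in> Leb A" "y \<noteq> yt"
    then show "\<exists>(x', y') \<in> regular_pts \<gamma>. x' \<in> A \<and> max (c x' y) (c x y') < max (c x y) (c x' y')"
      using improving by simp
  qed
qed

end
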